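(* Let $G$ and $H$ be co-$H$ spaces and $X$ a pointed space. Then composition of maps induces a well-defined homomorphism $e[G,H]\otimes e[H,X]\to e[G,X]$ (i.e. composition of congruence classes is bilinear).
   Context: Two pointed maps $f,g\colon A\to B$ are congruent if $\Sigma f\simeq\Sigma g$; $e[A,B]$ is the set of congruence classes of pointed maps $A\to B$. For a co-$H$ space $G$, $e[G,B]$ is an Abelian group with operation induced by the co-$H$ structure of $G$. *)

theory Defs
  imports "HOL-Analysis.Analysis"
begin

definition quotient_topology :: "'a topology \<Rightarrow> ('a \<Rightarrow> 'b) \<Rightarrow> 'b topology" where
  "quotient_topology X q =
     topology (\<lambda>U. U \<subseteq> q ` topspace X \<and> openin X {x \<in> topspace X. q x \<in> U})"

lemma istopology_quotient:
  "istopology (\<lambda>U. U \<subseteq> q ` topspace X \<and> openin X {x \<in> topspace X. q x \<in> U})"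
proof -
  have 1: "{x \<in> topspace X. q x \<in> S \<inter> T} = {x \<in> topspace X. q x \<in> S} \<inter> {x \<in> topspace X. q x \<in> T}" for S T
    by auto
  have 2: "{x \<in> topspace X. q x \<in> \<Union>K} = (\<Union>U\<in>K. {x \<in> topspace X. q x \<in> U})" for K
    by auto
  show ?thesis
    unfolding istopology_def 1 2 by blast
qed

lemma openin_quotient_topology:
  "openin (quotient_topology X q) U \<longleftrightarrow>
     U \<subseteq> q ` topspace X \<and> openin X {x \<in> topspace X. q x \<in> U}"
  by (simp add: quotient_topology_def istopology_quotient)

definition pointed_map :: "'a topology \<Rightarrow> 'a \<Rightarrow> 'b topology \<Rightarrow> 'b \<Rightarrow> ('a \<Rightarrow> 'b) \<Rightarrow> bool" where
  "pointed_map A a0 B b0 f \<longleftrightarrow> continuous_map A B f \<and> f a0 = b0"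

definition pointed_homotopic ::
  "'a topology \<Rightarrow> 'a \<Rightarrow> 'b topology \<Rightarrow> 'b \<Rightarrow> ('a \<Rightarrow> 'b) \<Rightarrow> ('a \<Rightarrow> 'b) \<Rightarrow> bool" where
  "pointed_homotopic A a0 B b0 f g \<longleftrightarrow> homotopic_with (\<lambda>h. h a0 = b0) A B f g"

text \<open>The reduced suspension of (A,a0) is the quotient of A \<times> [0,1] collapsing
  A \<times> {0} \<union> A \<times> {1} \<union> {a0} \<times> [0,1] to the base point None.\<close>

definition susp_pt :: "'a \<Rightarrow> 'a \<Rightarrow> real \<Rightarrow> ('a \<times> real) option" where
  "susp_pt a0 a t = (if a = a0 \<or> t = 0 \<or> t = 1 then None else Some (a, t))"

definition susp :: "'a topology \<Rightarrow> 'a \<Rightarrow> ('a \<times> real) option topology" where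
  "susp A a0 = quotient_topology (prod_topology A (top_of_set {0..1}))
                 (\<lambda>(a, t). susp_pt a0 a t)"

definition susp_fun :: "'b \<Rightarrow> ('a \<Rightarrow> 'b) \<Rightarrow> ('a \<times> real) option \<Rightarrow> ('b \<times> real) option" where
  "susp_fun b0 f z = (case z of None \<Rightarrow> None | Some (a, t) \<Rightarrow> susp_pt b0 (f a) t)"

definition congruent_maps ::
  "'a topology \<Rightarrow> 'a \<Rightarrow> 'b topology \<Rightarrow> 'b \<Rightarrow> ('a \<Rightarrow> 'b) \<Rightarrow> ('a \<Rightarrow> 'b) \<Rightarrow> bool" where
  "congruent_maps A a0 B b0 f g \<longleftrightarrow>
     pointed_homotopic (susp A a0) None (susp B b0) None (susp_fun b0 f) (susp_fun b0 g)"

text \<open>The wedge G \<or> G: quotient of the disjoint sum of two copies of G (indexed by bool)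
  identifying the two base points; base point (True, g0).\<close>

definition wedge_pt :: "'a \<Rightarrow> bool \<times> 'a \<Rightarrow> bool \<times> 'a" where
  "wedge_pt g0 z = (if snd z = g0 then (True, g0) else z)"

definition wedge :: "'a topology \<Rightarrow> 'a \<Rightarrow> (bool \<times> 'a) topology" where
  "wedge G g0 = quotient_topology (sum_topology (\<lambda>_. G) UNIV) (wedge_pt g0)"

text \<open>Fold map applied to f \<or> g : G \<or> G \<rightarrow> B.\<close>
definition wedge_fold :: "('a \<Rightarrow> 'b) \<Rightarrow> ('a \<Rightarrow> 'b) \<Rightarrow> bool \<times> 'a \<Rightarrow> 'b" where
  "wedge_fold f g z = (if fst z then f (snd z) else g (snd z))"

definition coH_space :: "'a topology \<Rightarrow> 'a \<Rightarrow> ('a \<Rightarrow> bool \<times> 'a) \<Rightarrow> bool" where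
  "coH_space G g0 \<nu> \<longleftrightarrow>
     g0 \<in> topspace G \<and>
     pointed_map G g0 (wedge G g0) (True, g0) \<nu> \<and>
     pointed_homotopic G g0 G g0 (wedge_fold id (\<lambda>_. g0) \<circ> \<nu>) id \<and>
     pointed_homotopic G g0 G g0 (wedge_fold (\<lambda>_. g0) id \<circ> \<nu>) id"

definition coH_sum :: "('a \<Rightarrow> bool \<times> 'a) \<Rightarrow> ('a \<Rightarrow> 'b) \<Rightarrow> ('a \<Rightarrow> 'b) \<Rightarrow> 'a \<Rightarrow> 'b" where
  "coH_sum \<nu> f g = wedge_fold f g \<circ> \<nu>"

end

theory Submission
  imports Defs
begin

text \<open>Suspension is a functor on pointed homotopy classes, so composition descends to
  congruence classes, and post-composition with g is additive already before suspending.
  For pre-composition, both co-H sums become homotopic after suspension to concatenation in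
  the suspension coordinate, which visibly commutes with pre-composition by \<open>\<Sigma>f\<close>.  The
  comparison is an Eckmann--Hilton interchange: \<open>\<Sigma>(a + b) = \<nabla>(\<Sigma>a \<or> \<Sigma>b) \<circ> \<Sigma>\<nu>\<close>;
  replacing \<open>\<Sigma>a\<close> by \<open>\<Sigma>a \<cdot> 0\<close> and \<open>\<Sigma>b\<close> by \<open>0 \<cdot> \<Sigma>b\<close> turns this into
  \<open>\<Sigma>(a + 0) \<cdot> \<Sigma>(0 + b)\<close>, which is homotopic to \<open>\<Sigma>a \<cdot> \<Sigma>b\<close> by the co-H counit laws.\<close>

lemma topspace_quotient_topology: "topspace (quotient_topology X q) = q ` topspace X"
proof (rule subset_antisym)
  have "openin (quotient_topology X q) (topspace (quotient_topology X q))"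
    by (rule openin_topspace)
  then show "topspace (quotient_topology X q) \<subseteq> q ` topspace X"
    unfolding openin_quotient_topology by (rule conjunct1)
  have "{x \<in> topspace X. q x \<in> q ` topspace X} = topspace X" by auto
  then have "openin (quotient_topology X q) (q ` topspace X)"
    unfolding openin_quotient_topology by simp
  then show "q ` topspace X \<subseteq> topspace (quotient_topology X q)"
    by (rule openin_subset)
qed

lemma quotient_map_quotient_topology: "quotient_map X (quotient_topology X q) q"
  unfolding quotient_map_def topspace_quotient_topology openin_quotient_topology
  by simp

abbreviation unit_interval :: "real topology" where
  "unit_interval \<equiv> top_of_set {0..1}"

lemma locally_compact_space_unit_interval: "locally_compact_space unit_interval"
  by (rule compact_imp_locally_compact_space, rule compact_space_subtopology) simp

lemma Hausdorff_space_unit_interval: "Hausdorff_space unit_interval"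
  by (rule Hausdorff_space_subtopology) (rule Hausdorff_space_euclidean)

lemma continuous_map_fst_snd: "continuous_map (prod_topology X (prod_topology Y Z)) Y (\<lambda>x. fst (snd x))"
  using continuous_map_compose[OF continuous_map_snd continuous_map_fst] by (simp add: o_def)

lemma continuous_map_snd_snd: "continuous_map (prod_topology X (prod_topology Y Z)) Z (\<lambda>x. snd (snd x))"
  using continuous_map_compose[OF continuous_map_snd continuous_map_snd] by (simp add: o_def)

lemma continuous_map_fst_real: "continuous_map (prod_topology unit_interval X) euclideanreal fst"
  using continuous_map_fst[of unit_interval X] by (simp add: continuous_map_in_subtopology)

lemma continuous_map_snd_snd_real:
  "continuous_map (prod_topology X (prod_topology Y unit_interval)) euclideanreal (\<lambda>w. snd (snd w))"
  using continuous_map_snd_snd[of X Y unit_interval] by (simp add: continuous_map_in_subtopology)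

lemma continuous_map_if_clopen:
  assumes f: "continuous_map X Y f" and g: "continuous_map X Y g"
    and open_P: "openin X {x \<in> topspace X. P x}" and open_not_P: "openin X {x \<in> topspace X. \<not> P x}"
  shows "continuous_map X Y (\<lambda>x. if P x then f x else g x)"
proof (rule continuous_map_cases_alt)
  have "topspace X - {x \<in> topspace X. P x} = {x \<in> topspace X. \<not> P x}" by blast
  then have closed_P: "closedin X {x \<in> topspace X. P x}"
    unfolding closedin_def using open_not_P by simp
  show "continuous_map (subtopology X (X closure_of {x \<in> topspace X. P x})) Y f"
    by (rule continuous_map_from_subtopology[OF f])
  show "continuous_map (subtopology X (X closure_of {x \<in> topspace X. \<not> P x})) Y g"
    by (rule continuous_map_from_subtopology[OF g])
  fix x assume "x \<in> X frontier_of {x \<in> topspace X. P x}"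
  then have False
    unfolding frontier_of_def closure_of_closedin[OF closed_P] interior_of_openin[OF open_P] by simp
  then show "f x = g x" ..
qed

lemma continuous_map_snd_sum_topology: "continuous_map (sum_topology (\<lambda>_. G) I) G snd"
  unfolding continuous_map_def
proof (intro conjI allI impI)
  show "snd \<in> topspace (sum_topology (\<lambda>_. G) I) \<rightarrow> topspace G" by auto
  fix U assume U: "openin G U"
  have snd_preimage: "{x \<in> topspace (sum_topology (\<lambda>_. G) I). snd x \<in> U} = Sigma I (\<lambda>_. U)"
    using openin_subset[OF U] by auto
  show "openin (sum_topology (\<lambda>_. G) I) {x \<in> topspace (sum_topology (\<lambda>_. G) I). snd x \<in> U}"
    unfolding snd_preimage openin_disjoint_union using U by simp
qed

lemma openin_sum_topology_component:
  "openin (sum_topology X I) {x \<in> topspace (sum_topology X I). fst x = i}"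
proof -
  have component: "{x \<in> topspace (sum_topology X I). fst x = i} =
      Sigma I (\<lambda>j. if j = i then topspace (X j) else {})"
    by (auto split: if_splits)
  show ?thesis unfolding component openin_disjoint_union by simp
qed

lemma pointed_homotopicI:
  assumes "continuous_map (prod_topology unit_interval X) Y h"
    and "\<And>x. x \<in> topspace X \<Longrightarrow> h (0,x) = f x"
    and "\<And>x. x \<in> topspace X \<Longrightarrow> h (1,x) = g x"
    and "\<And>t. t \<in> {0..1} \<Longrightarrow> h (t,a0) = b0"
    and "a0 \<in> topspace X"
  shows "pointed_homotopic X a0 Y b0 f g"
  unfolding pointed_homotopic_def
proof (subst homotopic_with)
  fix h k :: "'a \<Rightarrow> 'b" assume "\<And>x. x \<in> topspace X \<Longrightarrow> h x = k x"
  then show "(h a0 = b0) = (k a0 = b0)" using assms(5) by simp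
qed (use assms in blast)

lemma pointed_homotopicE:
  assumes "pointed_homotopic X a0 Y b0 f g"
  obtains h where "continuous_map (prod_topology unit_interval X) Y h"
    "\<And>x. h (0,x) = f x" "\<And>x. h (1,x) = g x" "\<And>t. t \<in> {0..1} \<Longrightarrow> h (t,a0) = b0"
  using assms unfolding pointed_homotopic_def homotopic_with_def by auto

lemma pointed_homotopic_refl:
  "continuous_map X Y f \<Longrightarrow> f a0 = b0 \<Longrightarrow> pointed_homotopic X a0 Y b0 f f"
  unfolding pointed_homotopic_def by simp

lemma pointed_homotopic_sym:
  "pointed_homotopic X a0 Y b0 f g \<Longrightarrow> pointed_homotopic X a0 Y b0 g f"
  unfolding pointed_homotopic_def by (rule homotopic_with_symD)

lemma pointed_homotopic_trans [trans]:
  "pointed_homotopic X a0 Y b0 f g \<Longrightarrow> pointed_homotopic X a0 Y b0 g h \<Longrightarrow>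
   pointed_homotopic X a0 Y b0 f h"
  unfolding pointed_homotopic_def by (rule homotopic_with_trans)

lemma pointed_homotopic_eq_trans [trans]:
  "f = g \<Longrightarrow> pointed_homotopic X a0 Y b0 g h \<Longrightarrow> pointed_homotopic X a0 Y b0 f h"
  by simp

lemma pointed_homotopic_compose_left:
  "pointed_homotopic X a0 Y b0 f g \<Longrightarrow> continuous_map Y Z k \<Longrightarrow> k b0 = c0 \<Longrightarrow>
   pointed_homotopic X a0 Z c0 (k \<circ> f) (k \<circ> g)"
  unfolding pointed_homotopic_def
  by (erule homotopic_with_compose_continuous_map_left) simp_all

lemma pointed_homotopic_compose_right:
  "pointed_homotopic Y b0 Z c0 f g \<Longrightarrow> continuous_map X Y k \<Longrightarrow> k a0 = b0 \<Longrightarrow>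
   pointed_homotopic X a0 Z c0 (f \<circ> k) (g \<circ> k)"
  unfolding pointed_homotopic_def
  by (erule homotopic_with_compose_continuous_map_right) simp_all

lemma pointed_map_compose:
  "pointed_map G g0 H h0 f \<Longrightarrow> pointed_map H h0 X x0 g \<Longrightarrow> pointed_map G g0 X x0 (g \<circ> f)"
  unfolding pointed_map_def using continuous_map_compose by fastforce

section \<open>Reduced suspension\<close>

lemma quotient_map_susp: "quotient_map (prod_topology A unit_interval) (susp A a0) (\<lambda>(a,t). susp_pt a0 a t)"
  unfolding susp_def by (rule quotient_map_quotient_topology)

lemma topspace_susp: "topspace (susp A a0) = (\<lambda>(a,t). susp_pt a0 a t) ` (topspace A \<times> {0..1})"
  unfolding susp_def topspace_quotient_topology by simp

lemma topspace_suspE: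
  assumes "z \<in> topspace (susp A a0)"
  obtains x t where "x \<in> topspace A" "t \<in> {0..1}" "z = susp_pt a0 x t"
  using assms unfolding topspace_susp by auto

lemma None_in_topspace_susp: "a0 \<in> topspace A \<Longrightarrow> None \<in> topspace (susp A a0)"
  unfolding topspace_susp by (rule image_eqI[of _ _ "(a0,0)"]) (simp_all add: susp_pt_def)

lemma continuous_map_susp_pt:
  assumes "continuous_map Z A x" and "continuous_map Z unit_interval r"
  shows "continuous_map Z (susp A a0) (\<lambda>z. susp_pt a0 (x z) (r z))"
proof -
  have "continuous_map Z (prod_topology A unit_interval) (\<lambda>z. (x z, r z))"
    using assms by (simp add: continuous_map_pairwise o_def)
  from continuous_map_compose[OF this quotient_imp_continuous_map[OF quotient_map_susp]]
  show ?thesis by (simp add: o_def)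
qed

lemma continuous_map_susp_pt_real:
  assumes "continuous_map Z A x"
    and "continuous_map Z euclideanreal r" "\<And>z. z \<in> topspace Z \<Longrightarrow> r z \<in> {0..1}"
  shows "continuous_map Z (susp A a0) (\<lambda>z. susp_pt a0 (x z) (r z))"
  using assms by (intro continuous_map_susp_pt) (auto simp: continuous_map_in_subtopology)

lemma continuous_map_from_susp:
  assumes "continuous_map (prod_topology A unit_interval) Y (\<lambda>(a,t). F (susp_pt a0 a t))"
  shows "continuous_map (susp A a0) Y F"
proof (rule continuous_compose_quotient_map[OF quotient_map_susp])
  show "continuous_map (prod_topology A unit_interval) Y (F \<circ> (\<lambda>(a, t). susp_pt a0 a t))"
    using assms by (simp add: o_def case_prod_unfold)
qed

text \<open>Products with the locally compact Hausdorff interval preserve quotient maps.\<close>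

lemma continuous_map_from_interval_susp:
  assumes "continuous_map (prod_topology unit_interval (prod_topology A unit_interval)) Y
             (\<lambda>(s,(a,t)). F (s, susp_pt a0 a t))"
  shows "continuous_map (prod_topology unit_interval (susp A a0)) Y F"
proof -
  have "quotient_map (prod_topology unit_interval (prod_topology A unit_interval))
          (prod_topology unit_interval (susp A a0)) (\<lambda>(s,y). (s, (\<lambda>(a,t). susp_pt a0 a t) y))"
    by (rule quotient_map_prod_right[OF locally_compact_space_unit_interval _ quotient_map_susp])
      (simp add: Hausdorff_space_unit_interval)
  then show ?thesis
    by (rule continuous_compose_quotient_map) (use assms in \<open>simp add: o_def case_prod_unfold\<close>)
qed

lemma continuous_map_homotopy_susp_pt:
  assumes "continuous_map (prod_topology unit_interval (susp A a0)) Y U"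
    and "continuous_map Z euclideanreal s" "\<And>z. z \<in> topspace Z \<Longrightarrow> s z \<in> {0..1}"
    and "continuous_map Z A x"
    and "continuous_map Z euclideanreal r" "\<And>z. z \<in> topspace Z \<Longrightarrow> r z \<in> {0..1}"
  shows "continuous_map Z Y (\<lambda>z. U (s z, susp_pt a0 (x z) (r z)))"
proof -
  have "continuous_map Z (prod_topology unit_interval (susp A a0)) (\<lambda>z. (s z, susp_pt a0 (x z) (r z)))"
    using assms by (simp add: continuous_map_pairwise o_def continuous_map_susp_pt_real
        continuous_map_in_subtopology)
  from continuous_map_compose[OF this assms(1)] show ?thesis by (simp add: o_def)
qed

lemma susp_fun_None [simp]: "susp_fun b0 f None = None"
  by (simp add: susp_fun_def)

lemma susp_fun_susp_pt: "f a0 = b0 \<Longrightarrow> susp_fun b0 f (susp_pt a0 a t) = susp_pt b0 (f a) t"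
  by (simp add: susp_pt_def susp_fun_def)

lemma susp_fun_compose:
  assumes "g h0 = x0"
  shows "susp_fun x0 (g \<circ> f) = susp_fun x0 g \<circ> susp_fun h0 f"
proof
  fix z show "susp_fun x0 (g \<circ> f) z = (susp_fun x0 g \<circ> susp_fun h0 f) z"
    using assms by (cases z) (auto simp: susp_fun_def susp_pt_def)
qed

lemma continuous_map_susp_fun:
  assumes f: "pointed_map A a0 B b0 f"
  shows "continuous_map (susp A a0) (susp B b0) (susp_fun b0 f)"
proof (rule continuous_map_from_susp)
  have "continuous_map A B f" and f0: "f a0 = b0" using f by (auto simp: pointed_map_def)
  then have "continuous_map (prod_topology A unit_interval) B (\<lambda>x. f (fst x))"
    using continuous_map_compose[OF continuous_map_fst] by (auto simp: o_def)
  then have "continuous_map (prod_topology A unit_interval) (susp B b0) (\<lambda>x. susp_pt b0 (f (fst x)) (snd x))"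
    by (rule continuous_map_susp_pt) (rule continuous_map_snd)
  then show "continuous_map (prod_topology A unit_interval) (susp B b0) (\<lambda>(a, t). susp_fun b0 f (susp_pt a0 a t))"
    by (simp add: case_prod_unfold susp_fun_susp_pt[of f, OF f0])
qed

lemma pointed_homotopic_susp_fun:
  assumes hfg: "pointed_homotopic A a0 B b0 f g" and a0: "a0 \<in> topspace A"
  shows "pointed_homotopic (susp A a0) None (susp B b0) None (susp_fun b0 f) (susp_fun b0 g)"
proof -
  obtain h where ch: "continuous_map (prod_topology unit_interval A) B h"
    and h0: "\<And>x. h (0,x) = f x" and h1: "\<And>x. h (1,x) = g x"
    and h_base: "\<And>t. t \<in> {0..1} \<Longrightarrow> h (t,a0) = b0"
    using pointed_homotopicE[OF hfg] by blast
  define H where "H = (\<lambda>(s,z). susp_fun b0 (\<lambda>a. h (s,a)) z)"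
  let ?T = "prod_topology unit_interval (prod_topology A unit_interval)"
  show ?thesis
  proof (rule pointed_homotopicI[where h=H])
    have "continuous_map ?T (prod_topology unit_interval A) (\<lambda>x. (fst x, fst (snd x)))"
      by (simp add: continuous_map_pairwise o_def continuous_map_fst continuous_map_fst_snd)
    then have "continuous_map ?T B (\<lambda>x. h (fst x, fst (snd x)))"
      using continuous_map_compose[OF _ ch] by (simp add: o_def)
    then have "continuous_map ?T (susp B b0) (\<lambda>x. susp_pt b0 (h (fst x, fst (snd x))) (snd (snd x)))"
      by (rule continuous_map_susp_pt) (rule continuous_map_snd_snd)
    then have "continuous_map ?T (susp B b0) (\<lambda>(s,(a,t)). H (s, susp_pt a0 a t))"
    proof (rule continuous_map_eq)
      fix x assume "x \<in> topspace ?T"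
      then show "susp_pt b0 (h (fst x, fst (snd x))) (snd (snd x)) = (\<lambda>(s,(a,t)). H (s, susp_pt a0 a t)) x"
        unfolding H_def using susp_fun_susp_pt[of "\<lambda>a. h (fst x, a)" a0 b0] h_base
        by (auto simp: case_prod_unfold)
    qed
    then show "continuous_map (prod_topology unit_interval (susp A a0)) (susp B b0) H"
      by (rule continuous_map_from_interval_susp)
    show "H (0, x) = susp_fun b0 f x" "H (1, x) = susp_fun b0 g x" "H (t, None) = None" for x t
      unfolding H_def using h0 h1 by simp_all
    show "None \<in> topspace (susp A a0)" by (rule None_in_topspace_susp[OF a0])
  qed
qed

lemma congruent_maps_compose:
  assumes "pointed_map G g0 H h0 f'" and g: "pointed_map H h0 X x0 g" and g': "pointed_map H h0 X x0 g'"
    and "congruent_maps G g0 H h0 f f'" and "congruent_maps H h0 X x0 g g'"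
  shows "congruent_maps G g0 X x0 (g \<circ> f) (g' \<circ> f')"
proof -
  have "g h0 = x0" and "g' h0 = x0" using g g' by (auto simp: pointed_map_def)
  then have "susp_fun x0 (g \<circ> f) = susp_fun x0 g \<circ> susp_fun h0 f"
    and "susp_fun x0 (g' \<circ> f') = susp_fun x0 g' \<circ> susp_fun h0 f'"
    by (simp_all add: susp_fun_compose)
  moreover have "pointed_homotopic (susp G g0) None (susp X x0) None
      (susp_fun x0 g \<circ> susp_fun h0 f) (susp_fun x0 g \<circ> susp_fun h0 f')"
    using \<open>congruent_maps G g0 H h0 f f'\<close> unfolding congruent_maps_def
    by (rule pointed_homotopic_compose_left) (simp_all add: continuous_map_susp_fun[OF g])
  moreover have "pointed_homotopic (susp G g0) None (susp X x0) None
      (susp_fun x0 g \<circ> susp_fun h0 f') (susp_fun x0 g' \<circ> susp_fun h0 f')"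
    using \<open>congruent_maps H h0 X x0 g g'\<close> unfolding congruent_maps_def
    by (rule pointed_homotopic_compose_right) (simp_all add: continuous_map_susp_fun assms(1))
  ultimately show ?thesis
    unfolding congruent_maps_def by (metis pointed_homotopic_trans)
qed

section \<open>Concatenation in the suspension coordinate\<close>

definition susp_concat ::
  "'a \<Rightarrow> (('a \<times> real) option \<Rightarrow> 'y option) \<Rightarrow> (('a \<times> real) option \<Rightarrow> 'y option) \<Rightarrow>
   ('a \<times> real) option \<Rightarrow> 'y option" where
  "susp_concat a0 u v z = (case z of None \<Rightarrow> None | Some (x,t) \<Rightarrow>
      if t \<le> 1/2 then u (susp_pt a0 x (2*t)) else v (susp_pt a0 x (2*t-1)))"

lemma susp_concat_None [simp]: "susp_concat a0 u v None = None"
  by (simp add: susp_concat_def)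

lemma susp_concat_susp_pt:
  assumes "u None = None" "v None = None"
  shows "susp_concat a0 u v (susp_pt a0 x t) =
    (if t \<le> 1/2 then u (susp_pt a0 x (2*t)) else v (susp_pt a0 x (2*t-1)))"
  using assms by (auto simp: susp_concat_def susp_pt_def)

lemma continuous_map_susp_concat_homotopy:
  assumes cU: "continuous_map (prod_topology unit_interval (susp A a0)) Y U"
    and cV: "continuous_map (prod_topology unit_interval (susp A a0)) Y V"
    and U_base: "\<And>t. t \<in> {0..1} \<Longrightarrow> U (t,None) = None"
    and V_base: "\<And>t. t \<in> {0..1} \<Longrightarrow> V (t,None) = None"
  shows "continuous_map (prod_topology unit_interval (susp A a0)) Y
           (\<lambda>(s,z). susp_concat a0 (\<lambda>z. U (s,z)) (\<lambda>z. V (s,z)) z)"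
proof (rule continuous_map_from_interval_susp)
  let ?T = "prod_topology unit_interval (prod_topology A unit_interval)"
  have halves: "continuous_map (subtopology ?T S) euclideanreal fst"
    "continuous_map (subtopology ?T S) A (\<lambda>w. fst (snd w))"
    "continuous_map (subtopology ?T S) euclideanreal (\<lambda>w. 2 * snd (snd w))"
    "continuous_map (subtopology ?T S) euclideanreal (\<lambda>w. 2 * snd (snd w) - 1)" for S
    by (intro continuous_intros continuous_map_from_subtopology continuous_map_fst_real
        continuous_map_fst_snd continuous_map_snd_snd_real)+
  have "continuous_map ?T Y (\<lambda>w. if snd (snd w) \<le> 1/2
            then U (fst w, susp_pt a0 (fst (snd w)) (2 * snd (snd w)))
            else V (fst w, susp_pt a0 (fst (snd w)) (2 * snd (snd w) - 1)))"
  proof (rule continuous_map_cases_le)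
    show "continuous_map ?T euclideanreal (\<lambda>w. snd (snd w))"
      by (rule continuous_map_snd_snd_real)
    show "continuous_map (subtopology ?T {w \<in> topspace ?T. snd (snd w) \<le> 1/2}) Y
           (\<lambda>w. U (fst w, susp_pt a0 (fst (snd w)) (2 * snd (snd w))))"
      by (rule continuous_map_homotopy_susp_pt[OF cU halves(1) _ halves(2,3)]) auto
    show "continuous_map (subtopology ?T {w \<in> topspace ?T. 1/2 \<le> snd (snd w)}) Y
           (\<lambda>w. V (fst w, susp_pt a0 (fst (snd w)) (2 * snd (snd w) - 1)))"
      by (rule continuous_map_homotopy_susp_pt[OF cV halves(1) _ halves(2,4)]) auto
    fix w assume "w \<in> topspace ?T" "snd (snd w) = 1/2"
    then show "U (fst w, susp_pt a0 (fst (snd w)) (2 * snd (snd w))) =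
               V (fst w, susp_pt a0 (fst (snd w)) (2 * snd (snd w) - 1))"
      using U_base V_base by (auto simp: susp_pt_def)
  qed simp
  then show "continuous_map ?T Y
      (\<lambda>(s,(a,t)). (\<lambda>(s,z). susp_concat a0 (\<lambda>z. U (s,z)) (\<lambda>z. V (s,z)) z) (s, susp_pt a0 a t))"
  proof (rule continuous_map_eq)
    fix w assume "w \<in> topspace ?T"
    then have "fst w \<in> {0..1}" by auto
    then show "(if snd (snd w) \<le> 1/2 then U (fst w, susp_pt a0 (fst (snd w)) (2 * snd (snd w)))
                else V (fst w, susp_pt a0 (fst (snd w)) (2 * snd (snd w) - 1))) =
        (\<lambda>(s,(a,t)). (\<lambda>(s,z). susp_concat a0 (\<lambda>z. U (s,z)) (\<lambda>z. V (s,z)) z) (s, susp_pt a0 a t)) w"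
      using U_base V_base susp_concat_susp_pt[of "\<lambda>z. U (fst w, z)" "\<lambda>z. V (fst w, z)" a0]
      by (simp add: case_prod_unfold)
  qed
qed

lemma pointed_homotopic_susp_concat:
  assumes hu: "pointed_homotopic (susp A a0) None Y None u u'"
    and hv: "pointed_homotopic (susp A a0) None Y None v v'"
    and a0: "a0 \<in> topspace A"
  shows "pointed_homotopic (susp A a0) None Y None (susp_concat a0 u v) (susp_concat a0 u' v')"
proof -
  obtain U where cU: "continuous_map (prod_topology unit_interval (susp A a0)) Y U"
    and U0: "\<And>x. U (0,x) = u x" and U1: "\<And>x. U (1,x) = u' x"
    and U_base: "\<And>t. t \<in> {0..1} \<Longrightarrow> U (t,None) = None"
    using pointed_homotopicE[OF hu] by blast
  obtain V where cV: "continuous_map (prod_topology unit_interval (susp A a0)) Y V"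
    and V0: "\<And>x. V (0,x) = v x" and V1: "\<And>x. V (1,x) = v' x"
    and V_base: "\<And>t. t \<in> {0..1} \<Longrightarrow> V (t,None) = None"
    using pointed_homotopicE[OF hv] by blast
  show ?thesis
    by (rule pointed_homotopicI[OF continuous_map_susp_concat_homotopy[OF cU cV U_base V_base]])
      (simp_all add: U0 V0 U1 V1 None_in_topspace_susp[OF a0])
qed

lemma pointed_homotopic_susp_reparam:
  assumes cu: "continuous_map (susp A a0) Y u" and u0: "u None = None" and a0: "a0 \<in> topspace A"
    and cR: "continuous_map (prod_topology unit_interval (prod_topology A unit_interval)) euclideanreal
               (\<lambda>w. R (fst w) (snd (snd w)))"
    and R_range: "\<And>s t. s \<in> {0..1} \<Longrightarrow> t \<in> {0..1} \<Longrightarrow> R s t \<in> {0..1}"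
    and R0: "\<And>s. s \<in> {0..1} \<Longrightarrow> R s 0 = 0" and R1: "\<And>s. s \<in> {0..1} \<Longrightarrow> R s 1 = 1"
    and f: "\<And>x t. x \<in> topspace A \<Longrightarrow> t \<in> {0..1} \<Longrightarrow> f (susp_pt a0 x t) = u (susp_pt a0 x (R 0 t))"
    and g: "\<And>x t. x \<in> topspace A \<Longrightarrow> t \<in> {0..1} \<Longrightarrow> g (susp_pt a0 x t) = u (susp_pt a0 x (R 1 t))"
  shows "pointed_homotopic (susp A a0) None Y None f g"
proof -
  define W where "W = (\<lambda>(s,z). case z of None \<Rightarrow> None | Some (x,t) \<Rightarrow> u (susp_pt a0 x (R s t)))"
  have W_susp_pt: "W (s, susp_pt a0 x t) = u (susp_pt a0 x (R s t))" if "s \<in> {0..1}" for s x t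
    unfolding W_def using u0 R0[OF that] R1[OF that] by (auto simp: susp_pt_def)
  let ?T = "prod_topology unit_interval (prod_topology A unit_interval)"
  show ?thesis
  proof (rule pointed_homotopicI[where h=W])
    have "continuous_map ?T Y (\<lambda>w. u (susp_pt a0 (fst (snd w)) (R (fst w) (snd (snd w)))))"
      using continuous_map_compose[OF continuous_map_susp_pt_real[OF continuous_map_fst_snd cR] cu]
        R_range by (force simp: o_def)
    then have "continuous_map ?T Y (\<lambda>(s,(a,t)). W (s, susp_pt a0 a t))"
      by (rule continuous_map_eq) (auto simp: W_susp_pt)
    then show "continuous_map (prod_topology unit_interval (susp A a0)) Y W"
      by (rule continuous_map_from_interval_susp)
    fix z assume "z \<in> topspace (susp A a0)"
    then obtain x t where "x \<in> topspace A" "t \<in> {0..1}" "z = susp_pt a0 x t"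
      by (rule topspace_suspE)
    then show "W (0, z) = f z" "W (1, z) = g z" using W_susp_pt f g by simp_all
  next
    show "W (t, None) = None" for t unfolding W_def by simp
    show "None \<in> topspace (susp A a0)" by (rule None_in_topspace_susp[OF a0])
  qed
qed

lemma pointed_homotopic_susp_concat_const_right:
  assumes cu: "continuous_map (susp A a0) Y u" and u0: "u None = None" and a0: "a0 \<in> topspace A"
  shows "pointed_homotopic (susp A a0) None Y None (susp_concat a0 u (\<lambda>_. None)) u"
proof (rule pointed_homotopic_susp_reparam[OF cu u0 a0, where R="\<lambda>s t. min 1 ((2-s)*t)"])
  show "continuous_map (prod_topology unit_interval (prod_topology A unit_interval)) euclideanreal
          (\<lambda>w. min 1 ((2 - fst w) * snd (snd w)))"
    by (intro continuous_intros continuous_map_fst_real continuous_map_snd_snd_real)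
  fix x t assume "t \<in> {0..(1::real)}"
  then show "susp_concat a0 u (\<lambda>_. None) (susp_pt a0 x t) = u (susp_pt a0 x (min 1 ((2 - 0) * t)))"
    using u0 by (cases "t \<le> 1/2") (simp_all add: susp_concat_susp_pt, simp_all add: susp_pt_def)
qed auto

lemma pointed_homotopic_susp_concat_const_left:
  assumes cu: "continuous_map (susp A a0) Y u" and u0: "u None = None" and a0: "a0 \<in> topspace A"
  shows "pointed_homotopic (susp A a0) None Y None (susp_concat a0 (\<lambda>_. None) u) u"
proof (rule pointed_homotopic_susp_reparam[OF cu u0 a0, where R="\<lambda>s t. max 0 ((2-s)*t - (1-s))"])
  show "continuous_map (prod_topology unit_interval (prod_topology A unit_interval)) euclideanreal
          (\<lambda>w. max 0 ((2 - fst w) * snd (snd w) - (1 - fst w)))"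
    by (intro continuous_intros continuous_map_fst_real continuous_map_snd_snd_real)
  show "max 0 ((2 - s) * t - (1 - s)) \<in> {0..1}" if "s \<in> {0..1}" "t \<in> {0..1}" for s t :: real
  proof -
    have "(2 - s) * t \<le> 2 - s" using that mult_left_mono[of t 1 "2 - s"] by auto
    then show ?thesis by (auto simp: max_def)
  qed
  fix x t assume "t \<in> {0..(1::real)}"
  then show "susp_concat a0 (\<lambda>_. None) u (susp_pt a0 x t) = u (susp_pt a0 x (max 0 ((2 - 0) * t - (1 - 0))))"
    using u0 by (cases "t \<le> 1/2") (simp_all add: susp_concat_susp_pt, simp_all add: susp_pt_def)
qed auto

section \<open>Co-H sums after suspension\<close>

lemma quotient_map_wedge: "quotient_map (sum_topology (\<lambda>_. G) UNIV) (wedge G g0) (wedge_pt g0)"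
  unfolding wedge_def by (rule quotient_map_quotient_topology)

lemma openin_prod_sum_topology_component:
  "openin (prod_topology X (sum_topology Y I)) {w \<in> topspace (prod_topology X (sum_topology Y I)). fst (snd w) = i}"
proof -
  have "openin (prod_topology X (sum_topology Y I))
      {w \<in> topspace (prod_topology X (sum_topology Y I)). snd w \<in> {y \<in> topspace (sum_topology Y I). fst y = i}}"
    by (rule openin_continuous_map_preimage[OF continuous_map_snd openin_sum_topology_component])
  moreover have "{w \<in> topspace (prod_topology X (sum_topology Y I)). snd w \<in> {y \<in> topspace (sum_topology Y I). fst y = i}} =
      {w \<in> topspace (prod_topology X (sum_topology Y I)). fst (snd w) = i}"
    by auto
  ultimately show ?thesis by simp
qed

lemma quotient_map_interval_square_wedge:
  "quotient_map (prod_topology (prod_topology unit_interval unit_interval) (sum_topology (\<lambda>_. G) UNIV))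
     (prod_topology (prod_topology unit_interval unit_interval) (wedge G g0)) (\<lambda>(x,y). (x, wedge_pt g0 y))"
  by (rule quotient_map_prod_right[OF _ _ quotient_map_wedge])
    (metis locally_compact_space_prod_topology locally_compact_space_unit_interval,
     metis Hausdorff_space_prod_topology Hausdorff_space_unit_interval)

text \<open>Homotopies \<open>U\<close>, \<open>V\<close> on the suspension, placed on the two summands of the wedge, glue to
  a continuous map because both send the base point to the base point.\<close>

lemma continuous_map_wedge_homotopies:
  assumes cU: "continuous_map (prod_topology unit_interval (susp G g0)) Y U"
    and cV: "continuous_map (prod_topology unit_interval (susp G g0)) Y V"
    and U_base: "\<And>t. t \<in> {0..1} \<Longrightarrow> U (t,None) = None"
    and V_base: "\<And>t. t \<in> {0..1} \<Longrightarrow> V (t,None) = None"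
  shows "continuous_map (prod_topology (prod_topology unit_interval unit_interval) (wedge G g0)) Y
           (\<lambda>((s,t),(b,x)). if b then U (s, susp_pt g0 x t) else V (s, susp_pt g0 x t))"
    (is "continuous_map _ Y ?\<Psi>")
proof -
  let ?S = "prod_topology (prod_topology unit_interval unit_interval) (sum_topology (\<lambda>_. G) (UNIV::bool set))"
  have s: "continuous_map ?S euclideanreal (\<lambda>w. fst (fst w))"
    and t: "continuous_map ?S euclideanreal (\<lambda>w. snd (fst w))"
    using continuous_map_compose[OF continuous_map_fst continuous_map_fst, of unit_interval unit_interval]
      continuous_map_compose[OF continuous_map_fst continuous_map_snd, of unit_interval unit_interval]
    by (auto simp: o_def continuous_map_in_subtopology)
  have x: "continuous_map ?S G (\<lambda>w. snd (snd w))"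
    using continuous_map_compose[OF continuous_map_snd continuous_map_snd_sum_topology]
    by (simp add: o_def)
  have "continuous_map ?S Y (\<lambda>w. if fst (snd w) then U (fst (fst w), susp_pt g0 (snd (snd w)) (snd (fst w)))
          else V (fst (fst w), susp_pt g0 (snd (snd w)) (snd (fst w))))"
  proof (rule continuous_map_if_clopen)
    show "continuous_map ?S Y (\<lambda>w. U (fst (fst w), susp_pt g0 (snd (snd w)) (snd (fst w))))"
      by (rule continuous_map_homotopy_susp_pt[OF cU s _ x t]) auto
    show "continuous_map ?S Y (\<lambda>w. V (fst (fst w), susp_pt g0 (snd (snd w)) (snd (fst w))))"
      by (rule continuous_map_homotopy_susp_pt[OF cV s _ x t]) auto
    show "openin ?S {w \<in> topspace ?S. fst (snd w)}" "openin ?S {w \<in> topspace ?S. \<not> fst (snd w)}"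
      using openin_prod_sum_topology_component[of "prod_topology unit_interval unit_interval" "\<lambda>_. G" UNIV True]
        openin_prod_sum_topology_component[of "prod_topology unit_interval unit_interval" "\<lambda>_. G" UNIV False]
      by (simp_all only: eq_True eq_False)
  qed
  then have "continuous_map ?S Y (?\<Psi> \<circ> (\<lambda>(x,y). (x, wedge_pt g0 y)))"
  proof (rule continuous_map_eq)
    fix w assume "w \<in> topspace ?S"
    then have "fst (fst w) \<in> {0..1}" by auto
    then show "(if fst (snd w) then U (fst (fst w), susp_pt g0 (snd (snd w)) (snd (fst w)))
          else V (fst (fst w), susp_pt g0 (snd (snd w)) (snd (fst w)))) =
        (?\<Psi> \<circ> (\<lambda>(x,y). (x, wedge_pt g0 y))) w"
      using U_base V_base by (auto simp: wedge_pt_def case_prod_unfold susp_pt_def)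
  qed
  then show ?thesis
    by (rule continuous_compose_quotient_map[OF quotient_map_interval_square_wedge])
qed

text \<open>For \<open>u = susp_fun x0 a\<close> and \<open>v = susp_fun x0 b\<close> this is the suspension of \<open>coH_sum \<nu> a b\<close>,
  i.e. \<open>\<nabla>(u \<or> v) \<circ> susp_fun \<nu>\<close>; unlike that it makes sense for arbitrary maps on the suspension.\<close>

definition susp_coH_sum ::
  "'a \<Rightarrow> ('a \<Rightarrow> bool \<times> 'a) \<Rightarrow> (('a \<times> real) option \<Rightarrow> 'y option) \<Rightarrow>
   (('a \<times> real) option \<Rightarrow> 'y option) \<Rightarrow> ('a \<times> real) option \<Rightarrow> 'y option" where
  "susp_coH_sum g0 \<nu> u v z = (case z of None \<Rightarrow> None | Some (x,t) \<Rightarrow>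
     if fst (\<nu> x) then u (susp_pt g0 (snd (\<nu> x)) t) else v (susp_pt g0 (snd (\<nu> x)) t))"

lemma susp_coH_sum_None [simp]: "susp_coH_sum g0 \<nu> u v None = None"
  by (simp add: susp_coH_sum_def)

lemma susp_coH_sum_susp_pt:
  assumes "u None = None" "v None = None" "\<nu> g0 = (True, g0)"
  shows "susp_coH_sum g0 \<nu> u v (susp_pt g0 x t) =
    (if fst (\<nu> x) then u (susp_pt g0 (snd (\<nu> x)) t) else v (susp_pt g0 (snd (\<nu> x)) t))"
  using assms by (auto simp: susp_coH_sum_def susp_pt_def)

lemma continuous_map_susp_coH_sum_homotopy:
  assumes \<nu>: "pointed_map G g0 (wedge G g0) (True, g0) \<nu>"
    and cU: "continuous_map (prod_topology unit_interval (susp G g0)) Y U"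
    and cV: "continuous_map (prod_topology unit_interval (susp G g0)) Y V"
    and U_base: "\<And>t. t \<in> {0..1} \<Longrightarrow> U (t,None) = None"
    and V_base: "\<And>t. t \<in> {0..1} \<Longrightarrow> V (t,None) = None"
  shows "continuous_map (prod_topology unit_interval (susp G g0)) Y
           (\<lambda>(s,z). susp_coH_sum g0 \<nu> (\<lambda>z. U (s,z)) (\<lambda>z. V (s,z)) z)"
proof (rule continuous_map_from_interval_susp)
  have c\<nu>: "continuous_map G (wedge G g0) \<nu>" and \<nu>0: "\<nu> g0 = (True, g0)"
    using \<nu> by (auto simp: pointed_map_def)
  let ?T = "prod_topology unit_interval (prod_topology G unit_interval)"
  have "continuous_map ?T (prod_topology (prod_topology unit_interval unit_interval) (wedge G g0))
      (\<lambda>w. ((fst w, snd (snd w)), \<nu> (fst (snd w))))"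
    using continuous_map_compose[OF continuous_map_fst_snd c\<nu>]
    by (intro continuous_map_pairedI continuous_map_fst continuous_map_snd_snd) (simp_all add: o_def)
  from continuous_map_compose[OF this continuous_map_wedge_homotopies[OF cU cV U_base V_base]]
  show "continuous_map ?T Y
      (\<lambda>(s,(a,t)). (\<lambda>(s,z). susp_coH_sum g0 \<nu> (\<lambda>z. U (s,z)) (\<lambda>z. V (s,z)) z) (s, susp_pt g0 a t))"
  proof (rule continuous_map_eq)
    fix w assume "w \<in> topspace ?T"
    then have "fst w \<in> {0..1}" by auto
    then show "((\<lambda>((s,t),(b,x)). if b then U (s, susp_pt g0 x t) else V (s, susp_pt g0 x t)) \<circ>
        (\<lambda>w. ((fst w, snd (snd w)), \<nu> (fst (snd w))))) w =
        (\<lambda>(s,(a,t)). (\<lambda>(s,z). susp_coH_sum g0 \<nu> (\<lambda>z. U (s,z)) (\<lambda>z. V (s,z)) z) (s, susp_pt g0 a t)) w"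
      using U_base V_base susp_coH_sum_susp_pt[of "\<lambda>z. U (fst w, z)" "\<lambda>z. V (fst w, z)" \<nu> g0, OF _ _ \<nu>0]
      by (simp add: case_prod_unfold)
  qed
qed

lemma pointed_homotopic_susp_coH_sum:
  assumes \<nu>: "pointed_map G g0 (wedge G g0) (True, g0) \<nu>" and g0: "g0 \<in> topspace G"
    and hu: "pointed_homotopic (susp G g0) None Y None u u'"
    and hv: "pointed_homotopic (susp G g0) None Y None v v'"
  shows "pointed_homotopic (susp G g0) None Y None (susp_coH_sum g0 \<nu> u v) (susp_coH_sum g0 \<nu> u' v')"
proof -
  obtain U where cU: "continuous_map (prod_topology unit_interval (susp G g0)) Y U"
    and U0: "\<And>x. U (0,x) = u x" and U1: "\<And>x. U (1,x) = u' x"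
    and U_base: "\<And>t. t \<in> {0..1} \<Longrightarrow> U (t,None) = None"
    using pointed_homotopicE[OF hu] by blast
  obtain V where cV: "continuous_map (prod_topology unit_interval (susp G g0)) Y V"
    and V0: "\<And>x. V (0,x) = v x" and V1: "\<And>x. V (1,x) = v' x"
    and V_base: "\<And>t. t \<in> {0..1} \<Longrightarrow> V (t,None) = None"
    using pointed_homotopicE[OF hv] by blast
  show ?thesis
    by (rule pointed_homotopicI[OF continuous_map_susp_coH_sum_homotopy[OF \<nu> cU cV U_base V_base]])
      (simp_all add: U0 V0 U1 V1 None_in_topspace_susp[OF g0])
qed

lemma susp_fun_const [simp]: "susp_fun x0 (\<lambda>_. x0) = (\<lambda>_. None)"
  by (auto simp: fun_eq_iff susp_fun_def susp_pt_def split: option.split)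

lemma susp_fun_coH_sum:
  assumes "a g0 = x0" "b g0 = x0"
  shows "susp_fun x0 (coH_sum \<nu> a b) = susp_coH_sum g0 \<nu> (susp_fun x0 a) (susp_fun x0 b)"
proof
  fix z show "susp_fun x0 (coH_sum \<nu> a b) z = susp_coH_sum g0 \<nu> (susp_fun x0 a) (susp_fun x0 b) z"
    using assms
    by (cases z) (auto simp: susp_fun_def susp_coH_sum_def susp_pt_def coH_sum_def wedge_fold_def)
qed

lemma susp_coH_sum_susp_concat_interchange:
  assumes "\<nu> g0 = (True, g0)" "u None = None" "v None = None"
  shows "susp_coH_sum g0 \<nu> (susp_concat g0 u (\<lambda>_. None)) (susp_concat g0 (\<lambda>_. None) v) =
         susp_concat g0 (susp_coH_sum g0 \<nu> u (\<lambda>_. None)) (susp_coH_sum g0 \<nu> (\<lambda>_. None) v)"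
proof
  fix z show "susp_coH_sum g0 \<nu> (susp_concat g0 u (\<lambda>_. None)) (susp_concat g0 (\<lambda>_. None) v) z =
      susp_concat g0 (susp_coH_sum g0 \<nu> u (\<lambda>_. None)) (susp_coH_sum g0 \<nu> (\<lambda>_. None) v) z"
    using assms
    by (cases z) (auto simp: susp_coH_sum_def susp_concat_def susp_pt_def split: prod.split)
qed

lemma pointed_homotopic_coH_sum_const_right:
  assumes "coH_space G g0 \<nu>" and "pointed_map G g0 X x0 a"
  shows "pointed_homotopic G g0 X x0 (coH_sum \<nu> a (\<lambda>_. x0)) a"
proof -
  have "pointed_homotopic G g0 X x0 (a \<circ> (wedge_fold id (\<lambda>_. g0) \<circ> \<nu>)) (a \<circ> id)"
    using assms by (intro pointed_homotopic_compose_left) (auto simp: coH_space_def pointed_map_def)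
  moreover have "a \<circ> (wedge_fold id (\<lambda>_. g0) \<circ> \<nu>) = coH_sum \<nu> a (\<lambda>_. x0)"
    using assms(2) by (auto simp: fun_eq_iff coH_sum_def wedge_fold_def pointed_map_def)
  ultimately show ?thesis by simp
qed

lemma pointed_homotopic_coH_sum_const_left:
  assumes "coH_space G g0 \<nu>" and "pointed_map G g0 X x0 b"
  shows "pointed_homotopic G g0 X x0 (coH_sum \<nu> (\<lambda>_. x0) b) b"
proof -
  have "pointed_homotopic G g0 X x0 (b \<circ> (wedge_fold (\<lambda>_. g0) id \<circ> \<nu>)) (b \<circ> id)"
    using assms by (intro pointed_homotopic_compose_left) (auto simp: coH_space_def pointed_map_def)
  moreover have "b \<circ> (wedge_fold (\<lambda>_. g0) id \<circ> \<nu>) = coH_sum \<nu> (\<lambda>_. x0) b"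
    using assms(2) by (auto simp: fun_eq_iff coH_sum_def wedge_fold_def pointed_map_def)
  ultimately show ?thesis by simp
qed

lemma pointed_homotopic_susp_fun_coH_sum_susp_concat:
  assumes co: "coH_space G g0 \<nu>" and a: "pointed_map G g0 X x0 a" and b: "pointed_map G g0 X x0 b"
  shows "pointed_homotopic (susp G g0) None (susp X x0) None (susp_fun x0 (coH_sum \<nu> a b))
           (susp_concat g0 (susp_fun x0 a) (susp_fun x0 b))"
proof -
  have g0: "g0 \<in> topspace G" and \<nu>: "pointed_map G g0 (wedge G g0) (True, g0) \<nu>"
    using co by (auto simp: coH_space_def)
  have \<nu>0: "\<nu> g0 = (True, g0)" and a0: "a g0 = x0" and b0: "b g0 = x0"
    using \<nu> a b by (auto simp: pointed_map_def)
  let ?a = "susp_fun x0 a" and ?b = "susp_fun x0 b" and ?c = "\<lambda>_. None"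
  have "susp_fun x0 (coH_sum \<nu> a b) = susp_coH_sum g0 \<nu> ?a ?b"
    using a0 b0 by (rule susp_fun_coH_sum)
  also have "pointed_homotopic (susp G g0) None (susp X x0) None \<dots>
      (susp_coH_sum g0 \<nu> (susp_concat g0 ?a ?c) (susp_concat g0 ?c ?b))"
    by (intro pointed_homotopic_susp_coH_sum[OF \<nu> g0] pointed_homotopic_sym[OF
          pointed_homotopic_susp_concat_const_right[OF continuous_map_susp_fun[OF a] _ g0]]
          pointed_homotopic_sym[OF pointed_homotopic_susp_concat_const_left[OF continuous_map_susp_fun[OF b] _ g0]])
      simp_all
  also have "\<dots> = susp_concat g0 (susp_coH_sum g0 \<nu> ?a ?c) (susp_coH_sum g0 \<nu> ?c ?b)"
    using \<nu>0 by (simp add: susp_coH_sum_susp_concat_interchange)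
  also have "\<dots> = susp_concat g0 (susp_fun x0 (coH_sum \<nu> a (\<lambda>_. x0))) (susp_fun x0 (coH_sum \<nu> (\<lambda>_. x0) b))"
    using a0 b0 by (simp add: susp_fun_coH_sum)
  also have "pointed_homotopic (susp G g0) None (susp X x0) None \<dots> (susp_concat g0 ?a ?b)"
    using pointed_homotopic_coH_sum_const_right[OF co a] pointed_homotopic_coH_sum_const_left[OF co b]
    by (intro pointed_homotopic_susp_concat g0 pointed_homotopic_susp_fun)
  finally show ?thesis .
qed

section \<open>Bilinearity of composition\<close>

lemma congruent_maps_coH_sum_compose:
  assumes coG: "coH_space G g0 \<nu>G" and coH: "coH_space H h0 \<nu>H" and f: "pointed_map G g0 H h0 f"
    and g1: "pointed_map H h0 X x0 g1" and g2: "pointed_map H h0 X x0 g2"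
  shows "congruent_maps G g0 X x0 (coH_sum \<nu>H g1 g2 \<circ> f) (coH_sum \<nu>G (g1 \<circ> f) (g2 \<circ> f))"
proof -
  have f0: "f g0 = h0" and g10: "g1 h0 = x0" and g20: "g2 h0 = x0" and "\<nu>H h0 = (True, h0)"
    using f g1 g2 coH by (auto simp: pointed_map_def coH_space_def)
  then have "coH_sum \<nu>H g1 g2 h0 = x0" by (simp add: coH_sum_def wedge_fold_def)
  then have "susp_fun x0 (coH_sum \<nu>H g1 g2 \<circ> f) = susp_fun x0 (coH_sum \<nu>H g1 g2) \<circ> susp_fun h0 f"
    by (rule susp_fun_compose)
  then have "pointed_homotopic (susp G g0) None (susp X x0) None (susp_fun x0 (coH_sum \<nu>H g1 g2 \<circ> f))
      (susp_concat h0 (susp_fun x0 g1) (susp_fun x0 g2) \<circ> susp_fun h0 f)"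
    using pointed_homotopic_compose_right[OF pointed_homotopic_susp_fun_coH_sum_susp_concat[OF coH g1 g2]
        continuous_map_susp_fun[OF f]] by simp
  also have "\<dots> = susp_concat g0 (susp_fun x0 (g1 \<circ> f)) (susp_fun x0 (g2 \<circ> f))"
  proof
    fix z show "(susp_concat h0 (susp_fun x0 g1) (susp_fun x0 g2) \<circ> susp_fun h0 f) z =
        susp_concat g0 (susp_fun x0 (g1 \<circ> f)) (susp_fun x0 (g2 \<circ> f)) z"
      using f0 g10 g20 by (cases z) (auto simp: susp_concat_def susp_fun_def susp_pt_def)
  qed
  also have "pointed_homotopic (susp G g0) None (susp X x0) None \<dots>
      (susp_fun x0 (coH_sum \<nu>G (g1 \<circ> f) (g2 \<circ> f)))"
    by (rule pointed_homotopic_sym[OF pointed_homotopic_susp_fun_coH_sum_susp_concat[OF coG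
          pointed_map_compose[OF f g1] pointed_map_compose[OF f g2]]])
  finally show ?thesis unfolding congruent_maps_def .
qed

lemma compose_coH_sum: "g \<circ> coH_sum \<nu> f1 f2 = coH_sum \<nu> (g \<circ> f1) (g \<circ> f2)"
  by (simp add: fun_eq_iff coH_sum_def wedge_fold_def)

lemma continuous_map_wedge_fold:
  assumes "continuous_map G X a" "continuous_map G X b" "a g0 = b g0"
  shows "continuous_map (wedge G g0) X (wedge_fold a b)"
proof (rule continuous_compose_quotient_map[OF quotient_map_wedge])
  have "continuous_map (sum_topology (\<lambda>_. G) UNIV) X (\<lambda>z. if fst z then a (snd z) else b (snd z))"
  proof (rule continuous_map_if_clopen)
    show "continuous_map (sum_topology (\<lambda>_. G) UNIV) X (\<lambda>z. a (snd z))"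
      "continuous_map (sum_topology (\<lambda>_. G) UNIV) X (\<lambda>z. b (snd z))"
      using continuous_map_compose[OF continuous_map_snd_sum_topology] assms(1,2) by (auto simp: o_def)
    show "openin (sum_topology (\<lambda>_. G) UNIV) {z \<in> topspace (sum_topology (\<lambda>_. G) UNIV). fst z}"
      "openin (sum_topology (\<lambda>_. G) UNIV) {z \<in> topspace (sum_topology (\<lambda>_. G) UNIV). \<not> fst z}"
      using openin_sum_topology_component[of "\<lambda>_. G" UNIV True]
        openin_sum_topology_component[of "\<lambda>_. G" UNIV False] by simp_all
  qed
  then show "continuous_map (sum_topology (\<lambda>_. G) UNIV) X (wedge_fold a b \<circ> wedge_pt g0)"
    by (rule continuous_map_eq) (auto simp: wedge_fold_def wedge_pt_def assms(3))
qed

lemma pointed_map_coH_sum: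
  assumes "coH_space G g0 \<nu>" "pointed_map G g0 X x0 a" "pointed_map G g0 X x0 b"
  shows "pointed_map G g0 X x0 (coH_sum \<nu> a b)"
  using assms continuous_map_compose[of G "wedge G g0" \<nu> X "wedge_fold a b"] continuous_map_wedge_fold[of G X a b g0]
  by (auto simp: coH_space_def pointed_map_def coH_sum_def wedge_fold_def)

lemma congruent_maps_refl:
  assumes "pointed_map A a0 B b0 f" and "a0 \<in> topspace A"
  shows "congruent_maps A a0 B b0 f f"
  unfolding congruent_maps_def
  by (intro pointed_homotopic_susp_fun pointed_homotopic_refl assms) (use assms in \<open>simp_all add: pointed_map_def\<close>)

theorem proposition5p13:
  fixes G :: "'a topology" and H :: "'b topology" and X :: "'c topology"
    and g0 :: 'a and h0 :: 'b and x0 :: 'c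
    and \<nu>G :: "'a \<Rightarrow> bool \<times> 'a" and \<nu>H :: "'b \<Rightarrow> bool \<times> 'b"
  assumes coG: "coH_space G g0 \<nu>G"
    and coH: "coH_space H h0 \<nu>H"
    and x0: "x0 \<in> topspace X"
  shows
    "(\<forall>f f' g g'. pointed_map G g0 H h0 f \<and> pointed_map G g0 H h0 f' \<and>
        pointed_map H h0 X x0 g \<and> pointed_map H h0 X x0 g' \<and>
        congruent_maps G g0 H h0 f f' \<and> congruent_maps H h0 X x0 g g'
        \<longrightarrow> congruent_maps G g0 X x0 (g \<circ> f) (g' \<circ> f'))
   \<and> (\<forall>f g1 g2. pointed_map G g0 H h0 f \<and> pointed_map H h0 X x0 g1 \<and>
        pointed_map H h0 X x0 g2
        \<longrightarrow> congruent_maps G g0 X x0 (coH_sum \<nu>H g1 g2 \<circ> f)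
                                      (coH_sum \<nu>G (g1 \<circ> f) (g2 \<circ> f)))
   \<and> (\<forall>f1 f2 g. pointed_map G g0 H h0 f1 \<and> pointed_map G g0 H h0 f2 \<and>
        pointed_map H h0 X x0 g
        \<longrightarrow> congruent_maps G g0 X x0 (g \<circ> coH_sum \<nu>G f1 f2)
                                      (coH_sum \<nu>G (g \<circ> f1) (g \<circ> f2)))"
proof (intro conjI allI impI; elim conjE)
  show "congruent_maps G g0 X x0 (g \<circ> f) (g' \<circ> f')"
    if "pointed_map G g0 H h0 f'" "pointed_map H h0 X x0 g" "pointed_map H h0 X x0 g'"
      "congruent_maps G g0 H h0 f f'" "congruent_maps H h0 X x0 g g'" for f f' g g'
    using that by (rule congruent_maps_compose)
  show "congruent_maps G g0 X x0 (coH_sum \<nu>H g1 g2 \<circ> f) (coH_sum \<nu>G (g1 \<circ> f) (g2 \<circ> f))"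
    if "pointed_map G g0 H h0 f" "pointed_map H h0 X x0 g1" "pointed_map H h0 X x0 g2" for f g1 g2
    using coG coH that by (rule congruent_maps_coH_sum_compose)
  show "congruent_maps G g0 X x0 (g \<circ> coH_sum \<nu>G f1 f2) (coH_sum \<nu>G (g \<circ> f1) (g \<circ> f2))"
    if "pointed_map G g0 H h0 f1" "pointed_map G g0 H h0 f2" "pointed_map H h0 X x0 g" for f1 f2 g
    unfolding compose_coH_sum using coG
    by (intro congruent_maps_refl pointed_map_coH_sum[OF coG] pointed_map_compose[OF that(1,3)]
        pointed_map_compose[OF that(2,3)]) (simp add: coH_space_def)
qed

end
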